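(* Let $\Omega\subset\mathbb{R}^N$ be a bounded open set. Let $(\beta_n)_{n\ge1}$ be a sequence of maximal monotone graphs in $\mathbb{R}\times\mathbb{R}$ converging to a maximal monotone graph $\beta$ in the sense of graphs. Let $(z_n)_{n\ge1}$, $(w_n)_{n\ge1}$ be sequences in $L^1(\Omega)$ with $w_n\in\beta_n(z_n)$ $\mathcal{L}^N$-a.e. in $\Omega$ for every $n$. If $(w_n)$ is bounded in $L^1(\Omega)$ and $z_n\to z$ in $L^1(\Omega)$, then $z\in\operatorname{dom}(\beta)$ $\mathcal{L}^N$-a.e. in $\Omega$.
   Context: $\beta_n\to\beta$ in the sense of graphs means: for every $(x,y)\in\beta$ there exist $(x_n,y_n)\in\beta_n$ with $x_n\to x$ and $y_n\to y$ (for maximal monotone graphs, equivalently $(I+\lambda\beta_n)^{-1}(r)\to(I+\lambda\beta)^{-1}(r)$ for all $\lambda>0$, $r\in\mathbb{R}$). $\operatorname{dom}(\beta)=\{r:\beta(r)\ne\emptyset\}$. *)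

theory Defs
  imports "HOL-Analysis.Analysis"
begin

definition monotone_graph :: "(real \<times> real) set \<Rightarrow> bool" where
  "monotone_graph G \<longleftrightarrow>
     (\<forall>x1 y1 x2 y2. (x1, y1) \<in> G \<longrightarrow> (x2, y2) \<in> G \<longrightarrow> (x1 - x2) * (y1 - y2) \<ge> 0)"

definition maximal_monotone_graph :: "(real \<times> real) set \<Rightarrow> bool" where
  "maximal_monotone_graph G \<longleftrightarrow>
     monotone_graph G \<and> (\<forall>H. monotone_graph H \<longrightarrow> G \<subseteq> H \<longrightarrow> H = G)"

definition graph_converges :: "(nat \<Rightarrow> (real \<times> real) set) \<Rightarrow> (real \<times> real) set \<Rightarrow> bool" where
  "graph_converges B b \<longleftrightarrow>
     (\<forall>x y. (x, y) \<in> b \<longrightarrow>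
        (\<exists>xs ys. (\<forall>n. (xs n, ys n) \<in> B n) \<and> xs \<longlonglongrightarrow> x \<and> ys \<longlonglongrightarrow> y))"

definition graph_dom :: "(real \<times> real) set \<Rightarrow> real set" where
  "graph_dom G = {r. \<exists>s. (r, s) \<in> G}"

end

theory Submission imports Defs begin

text \<open>Pass to a subsequence along which z_n converges to z almost everywhere. By Fatou's lemma
  the L^1 bound on w_n makes liminf |w_n(x)| finite almost everywhere, so at almost every x a
  further subsequence of w_n(x) converges, say to y. The points (z_n(x), w_n(x)) of beta_n then
  converge to (z(x), y), which is monotonically related to every point of beta because each such
  point is a limit of points of the beta_n; by maximality, (z(x), y) lies in beta.\<close>

lemma maximal_monotone_graph_memI:
  assumes "maximal_monotone_graph b"
    and related: "\<And>a c. (a, c) \<in> b \<Longrightarrow> 0 \<le> (t - a) * (y - c)"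
  shows "(t, y) \<in> b"
proof -
  have "monotone_graph b" using assms(1) unfolding maximal_monotone_graph_def by blast
  moreover have "0 \<le> (a - t) * (c - y)" if "(a, c) \<in> b" for a c
    using related[OF that] by (simp add: algebra_simps)
  ultimately have "monotone_graph (insert (t, y) b)"
    using related unfolding monotone_graph_def by auto
  then show ?thesis using assms(1) unfolding maximal_monotone_graph_def by blast
qed

lemma graph_converges_limit_mem:
  assumes conv: "graph_converges B b" and "maximal_monotone_graph b"
    and mono: "\<And>n. monotone_graph (B n)"
    and "strict_mono \<phi>" and mem: "\<And>k. (u k, v k) \<in> B (\<phi> k)"
    and "u \<longlonglongrightarrow> t" and "v \<longlonglongrightarrow> y"
  shows "(t, y) \<in> b"
proof (rule maximal_monotone_graph_memI[OF \<open>maximal_monotone_graph b\<close>])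
  fix a c assume "(a, c) \<in> b"
  then obtain xs ys where xys: "\<And>n. (xs n, ys n) \<in> B n" "xs \<longlonglongrightarrow> a" "ys \<longlonglongrightarrow> c"
    using conv unfolding graph_converges_def by blast
  have "(xs \<circ> \<phi>) \<longlonglongrightarrow> a" "(ys \<circ> \<phi>) \<longlonglongrightarrow> c"
    using xys(2,3) \<open>strict_mono \<phi>\<close> by (blast intro: LIMSEQ_subseq_LIMSEQ)+
  then have "(\<lambda>k. (u k - xs (\<phi> k)) * (v k - ys (\<phi> k))) \<longlonglongrightarrow> (t - a) * (y - c)"
    using \<open>u \<longlonglongrightarrow> t\<close> \<open>v \<longlonglongrightarrow> y\<close> by (auto simp: o_def intro!: tendsto_intros)
  moreover have "\<And>k. 0 \<le> (u k - xs (\<phi> k)) * (v k - ys (\<phi> k))"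
    using mono mem xys(1) unfolding monotone_graph_def by blast
  ultimately show "0 \<le> (t - a) * (y - c)"
    by (blast intro: LIMSEQ_le_const)
qed

lemma graph_converges_dom_if_frequently_bounded:
  assumes "graph_converges B b" and "maximal_monotone_graph b"
    and "\<And>n. monotone_graph (B n)"
    and "strict_mono r" and mem: "\<And>k. (p k, q k) \<in> B (r k)"
    and "p \<longlonglongrightarrow> t" and q_bounded: "frequently (\<lambda>k. \<bar>q k\<bar> \<le> K) sequentially"
  shows "t \<in> graph_dom b"
proof -
  have "infinite {k. \<bar>q k\<bar> \<le> K}" (is "infinite ?S")
    using q_bounded by (simp add: frequently_cofinite[symmetric] cofinite_eq_sequentially)
  then obtain s :: "nat \<Rightarrow> nat" where s: "strict_mono s" "\<forall>k. s k \<in> ?S"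
    by (blast dest: infinite_enumerate)
  then have "bounded (range (q \<circ> s))"
    by (intro boundedI[where B = K]) (auto simp: real_norm_def)
  then obtain s' y where s': "strict_mono s'" "(q \<circ> s \<circ> s') \<longlonglongrightarrow> y"
    using bounded_imp_convergent_subsequence by blast
  define \<sigma> where "\<sigma> = s \<circ> s'"
  have "strict_mono \<sigma>"
    unfolding \<sigma>_def using s(1) s'(1) by (rule strict_mono_o)
  have "(t, y) \<in> b"
  proof (rule graph_converges_limit_mem[OF assms(1-3), where \<phi> = "r \<circ> \<sigma>" and u = "p \<circ> \<sigma>"
        and v = "q \<circ> \<sigma>"])
    show "strict_mono (r \<circ> \<sigma>)"
      using \<open>strict_mono r\<close> \<open>strict_mono \<sigma>\<close> by (rule strict_mono_o)
    show "((p \<circ> \<sigma>) k, (q \<circ> \<sigma>) k) \<in> B ((r \<circ> \<sigma>) k)" for k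
      using mem by simp
    show "(p \<circ> \<sigma>) \<longlonglongrightarrow> t"
      using \<open>p \<longlonglongrightarrow> t\<close> \<open>strict_mono \<sigma>\<close> by (rule LIMSEQ_subseq_LIMSEQ)
    show "(q \<circ> \<sigma>) \<longlonglongrightarrow> y"
      using s'(2) by (simp add: \<sigma>_def o_assoc)
  qed
  then show ?thesis
    unfolding graph_dom_def by blast
qed

lemma AE_frequently_bounded_if_L1_bounded:
  fixes f :: "nat \<Rightarrow> 'a \<Rightarrow> real"
  assumes integrable: "\<And>n. integrable M (f n)"
    and L1_bounded: "\<And>n. (\<integral>x. \<bar>f n x\<bar> \<partial>M) \<le> C"
  shows "AE x in M. \<exists>K. frequently (\<lambda>n. \<bar>f n x\<bar> \<le> K) sequentially"
proof -
  have [measurable]: "f n \<in> borel_measurable M" for n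
    using integrable by (rule borel_measurable_integrable)
  have "(\<integral>\<^sup>+x. liminf (\<lambda>n. ennreal \<bar>f n x\<bar>) \<partial>M) \<le> liminf (\<lambda>n. \<integral>\<^sup>+x. ennreal \<bar>f n x\<bar> \<partial>M)"
    by (rule nn_integral_liminf) measurable
  also have "\<dots> \<le> ennreal C"
  proof (intro Liminf_le always_eventually allI)
    fix n
    have "(\<integral>\<^sup>+x. ennreal \<bar>f n x\<bar> \<partial>M) = ennreal (\<integral>x. \<bar>f n x\<bar> \<partial>M)"
      using integrable by (intro nn_integral_eq_integral integrable_abs) auto
    then show "(\<integral>\<^sup>+x. ennreal \<bar>f n x\<bar> \<partial>M) \<le> ennreal C"
      using L1_bounded by (simp add: ennreal_leI)
  qed simp
  finally have "(\<integral>\<^sup>+x. liminf (\<lambda>n. ennreal \<bar>f n x\<bar>) \<partial>M) \<noteq> \<infinity>"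
    by (simp add: neq_top_trans[OF ennreal_neq_top])
  then have "AE x in M. liminf (\<lambda>n. ennreal \<bar>f n x\<bar>) \<noteq> \<infinity>"
    by (intro nn_integral_PInf_AE) measurable
  then show ?thesis
  proof eventually_elim
    case (elim x)
    then have "liminf (\<lambda>n. ennreal \<bar>f n x\<bar>) < top"
      by (simp add: less_top[symmetric])
    then obtain K :: nat where K: "liminf (\<lambda>n. ennreal \<bar>f n x\<bar>) < of_nat K"
      using ennreal_Ex_less_of_nat by blast
    have "frequently (\<lambda>n. \<bar>f n x\<bar> \<le> real K) sequentially"
    proof (rule ccontr)
      assume "\<not> ?thesis"
      then have "\<forall>\<^sub>F n in sequentially. ennreal (real K) \<le> ennreal \<bar>f n x\<bar>"
        by (auto simp: not_frequently elim: eventually_mono)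
      then have "of_nat K \<le> liminf (\<lambda>n. ennreal \<bar>f n x\<bar>)"
        by (metis Liminf_bounded ennreal_of_nat_eq_real_of_nat)
      with K show False by simp
    qed
    then show ?case ..
  qed
qed

lemma set_L1_tendsto_AE_subseq:
  fixes f :: "nat \<Rightarrow> 'a \<Rightarrow> real"
  assumes "\<And>n. set_integrable M A (f n)" and "set_integrable M A g"
    and "(\<lambda>n. \<integral>x\<in>A. \<bar>f n x - g x\<bar> \<partial>M) \<longlonglongrightarrow> 0"
  obtains r where "strict_mono r" and "AE x in M. x \<in> A \<longrightarrow> (\<lambda>k. f (r k) x) \<longlonglongrightarrow> g x"
proof -
  obtain r where "strict_mono r"
    and lim: "AE x in M. (\<lambda>k. indicator A x * (f (r k) x - g x)) \<longlonglongrightarrow> 0"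
  proof (rule tendsto_L1_AE_subseq[where u = "\<lambda>n x. indicator A x * (f n x - g x)", THEN exE])
    show "integrable M (\<lambda>x. indicator A x * (f n x - g x))" for n
      using set_integral_diff(1)[OF assms(1,2)] by (simp add: set_integrable_def)
    show "(\<lambda>n. \<integral>x. norm (indicator A x * (f n x - g x)) \<partial>M) \<longlonglongrightarrow> 0"
      using assms(3) by (simp add: set_lebesgue_integral_def abs_mult)
  qed blast
  from lim have "AE x in M. x \<in> A \<longrightarrow> (\<lambda>k. f (r k) x) \<longlonglongrightarrow> g x"
    by eventually_elim (auto simp: LIM_zero_iff)
  with \<open>strict_mono r\<close> show ?thesis
    using that by blast
qed

theorem lemma2p4:
  fixes \<Omega> :: "'a::euclidean_space set"
    and B :: "nat \<Rightarrow> (real \<times> real) set" and b :: "(real \<times> real) set"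
    and zs ws :: "nat \<Rightarrow> 'a \<Rightarrow> real" and z :: "'a \<Rightarrow> real"
  assumes "open \<Omega>" and "bounded \<Omega>"
    and "\<And>n. maximal_monotone_graph (B n)"
    and "maximal_monotone_graph b"
    and "graph_converges B b"
    and "\<And>n. set_integrable lebesgue \<Omega> (zs n)"
    and "\<And>n. set_integrable lebesgue \<Omega> (ws n)"
    and "\<And>n. AE x in lebesgue. x \<in> \<Omega> \<longrightarrow> (zs n x, ws n x) \<in> B n"
    and "\<exists>C. \<forall>n. (\<integral>x\<in>\<Omega>. \<bar>ws n x\<bar> \<partial>lebesgue) \<le> C"
    and "set_integrable lebesgue \<Omega> z"
    and "(\<lambda>n. \<integral>x\<in>\<Omega>. \<bar>zs n x - z x\<bar> \<partial>lebesgue) \<longlonglongrightarrow> 0"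
  shows "AE x in lebesgue. x \<in> \<Omega> \<longrightarrow> z x \<in> graph_dom b"
proof -
  have mono: "\<And>n. monotone_graph (B n)"
    using assms(3) unfolding maximal_monotone_graph_def by blast
  obtain C where C: "\<And>n. (\<integral>x\<in>\<Omega>. \<bar>ws n x\<bar> \<partial>lebesgue) \<le> C"
    using assms(9) by blast
  obtain r where "strict_mono r"
    and z_lim: "AE x in lebesgue. x \<in> \<Omega> \<longrightarrow> (\<lambda>k. zs (r k) x) \<longlonglongrightarrow> z x"
    using set_L1_tendsto_AE_subseq[OF assms(6,10,11)] by blast
  have "AE x in lebesgue. \<exists>K. frequently (\<lambda>k. \<bar>indicator \<Omega> x * ws (r k) x\<bar> \<le> K) sequentially"
  proof (rule AE_frequently_bounded_if_L1_bounded)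
    show "integrable lebesgue (\<lambda>x. indicator \<Omega> x * ws (r k) x)" for k
      using assms(7) by (simp add: set_integrable_def)
    show "(\<integral>x. \<bar>indicator \<Omega> x * ws (r k) x\<bar> \<partial>lebesgue) \<le> C" for k
      using C by (simp add: set_lebesgue_integral_def abs_mult)
  qed
  moreover have "AE x in lebesgue. \<forall>n. x \<in> \<Omega> \<longrightarrow> (zs n x, ws n x) \<in> B n"
    using assms(8) by (subst AE_all_countable) blast
  ultimately show ?thesis
    using z_lim
  proof eventually_elim
    case (elim x)
    then show ?case
      by (auto intro: graph_converges_dom_if_frequently_bounded[OF assms(5,4) mono \<open>strict_mono r\<close>])
  qed
qed

end
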